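(* There exist $\mathrm{x},\mathrm{y}\in T\mathbb{R}^2$ and a path of type RSL in $\Gamma(\mathrm{x},\mathrm{y})$ that is bounded-homotopic in $\Gamma(\mathrm{x},\mathrm{y})$ to a path of type LSR in $\Gamma(\mathrm{x},\mathrm{y})$. (In words: an RSL Dubins path can sometimes be deformed into an LSR Dubins path.)
   Context: Elements of $T\mathbb{R}^2$ are pairs $\mathrm{x}=(x,X)$ with $x\in\mathbb{R}^2$ and $X$ a unit tangent vector. A bounded curvature path from $\mathrm{x}=(x,X)$ to $\mathrm{y}=(y,Y)$ is a $C^1$, piecewise $C^2$ path $\gamma:[0,s]\to\mathbb{R}^2$ parametrized by arc length with $\gamma(0)=x,\gamma'(0)=X,\gamma(s)=y,\gamma'(s)=Y$ and $\|\gamma''\|\le1$ wherever defined; $\Gamma(\mathrm{x},\mathrm{y})$ is the space of these with the $C^1$ metric. A bounded curvature homotopy is a continuous one-parameter family $p\in[0,1]\mapsto\mathcal{H}(p)\in\Gamma(\mathrm{x},\mathrm{y})$ joining two paths; paths so joined are bounded-homotopic. A CSC (Dubins) path is a concatenation of an arc of a unit circle of length less than $2\pi$, a line segment, and an arc of a unit circle of length less than $2\pi$; R denotes a clockwise traversed arc, L a counterclockwise traversed arc, S the segment, so RSL is clockwise arc–segment–counterclockwise arc and LSR is counterclockwise arc–segment–clockwise arc. *)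

theory Defs
  imports "HOL-Analysis.Analysis"
begin

text \<open>The plane R^2 is modelled by the complex numbers. An element of the unit
tangent bundle is a pair (x, X) with norm X = 1. A path of length L is a pair
(L, g) where g : [0,L] \<rightarrow> C (values outside [0,L] are irrelevant).\<close>

definition tangent :: "real \<Rightarrow> (real \<Rightarrow> complex) \<Rightarrow> real \<Rightarrow> complex" where
  "tangent L g t = vector_derivative g (at t within {0..L})"

definition bcp :: "complex \<Rightarrow> complex \<Rightarrow> complex \<Rightarrow> complex \<Rightarrow> real \<Rightarrow> (real \<Rightarrow> complex) \<Rightarrow> bool" where
  "bcp x X y Y L g \<longleftrightarrow>
     0 < L \<and>
     g differentiable_on {0..L} \<and>
     continuous_on {0..L} (tangent L g) \<and>
     (\<forall>t\<in>{0..L}. norm (tangent L g t) = 1) \<and>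
     g 0 = x \<and> tangent L g 0 = X \<and> g L = y \<and> tangent L g L = Y \<and>
     (\<exists>K. finite K \<and>
          (tangent L g) C1_differentiable_on ({0<..<L} - K) \<and>
          (\<forall>t\<in>{0<..<L} - K. norm (vector_derivative (tangent L g) (at t)) \<le> 1))"

text \<open>C^1 closeness of two paths, after reparametrising both linearly over [0,1]:
position and derivative of t \<mapsto> g(L t) differ by less than e uniformly.\<close>
definition c1_close :: "real \<Rightarrow> real \<times> (real \<Rightarrow> complex) \<Rightarrow> real \<times> (real \<Rightarrow> complex) \<Rightarrow> bool" where
  "c1_close e P Q \<longleftrightarrow>
     (\<forall>t\<in>{0..1::real}.
        norm (snd P (fst P * t) - snd Q (fst Q * t))
        + norm (of_real (fst P) * tangent (fst P) (snd P) (fst P * t)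
                - of_real (fst Q) * tangent (fst Q) (snd Q) (fst Q * t)) < e)"

definition bounded_homotopic ::
  "complex \<Rightarrow> complex \<Rightarrow> complex \<Rightarrow> complex \<Rightarrow> real \<times> (real \<Rightarrow> complex) \<Rightarrow> real \<times> (real \<Rightarrow> complex) \<Rightarrow> bool" where
  "bounded_homotopic x X y Y P Q \<longleftrightarrow>
     (\<exists>H :: real \<Rightarrow> real \<times> (real \<Rightarrow> complex).
        H 0 = P \<and> H 1 = Q \<and>
        (\<forall>p\<in>{0..1}. bcp x X y Y (fst (H p)) (snd (H p))) \<and>
        (\<forall>p\<in>{0..1}. \<forall>e>0. \<exists>d>0. \<forall>q\<in>{0..1}. \<bar>q - p\<bar> < d \<longrightarrow> c1_close e (H q) (H p)))"

text \<open>Unit-radius arcs starting at p with unit direction d, parametrised by arc length: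
R = clockwise, L = counterclockwise.\<close>
definition arcR :: "complex \<Rightarrow> complex \<Rightarrow> real \<Rightarrow> complex" where
  "arcR p d t = p + \<i> * d * (exp (- \<i> * of_real t) - 1)"

definition arcL :: "complex \<Rightarrow> complex \<Rightarrow> real \<Rightarrow> complex" where
  "arcL p d t = p - \<i> * d * (exp (\<i> * of_real t) - 1)"

definition rsl_path :: "complex \<Rightarrow> complex \<Rightarrow> real \<Rightarrow> real \<Rightarrow> real \<Rightarrow> real \<Rightarrow> complex" where
  "rsl_path x X a b c t =
     (let p1 = arcR x X a; d1 = X * exp (- \<i> * of_real a); p2 = p1 + of_real b * d1 in
      if t \<le> a then arcR x X t
      else if t \<le> a + b then p1 + of_real (t - a) * d1
      else arcL p2 d1 (t - a - b))"

definition lsr_path :: "complex \<Rightarrow> complex \<Rightarrow> real \<Rightarrow> real \<Rightarrow> real \<Rightarrow> real \<Rightarrow> complex" where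
  "lsr_path x X a b c t =
     (let p1 = arcL x X a; d1 = X * exp (\<i> * of_real a); p2 = p1 + of_real b * d1 in
      if t \<le> a then arcL x X t
      else if t \<le> a + b then p1 + of_real (t - a) * d1
      else arcR p2 d1 (t - a - b))"

end

theory Submission
  imports Defs
begin

text \<open>A unit-speed path is determined by its heading \<theta> through g(t) = \<integral>[0, t] exp (i \<theta>(s)) ds.
  It has curvature at most 1 where \<theta> is locally affine with slope in [-1, 1], and the C^1 distance
  of two such paths is controlled by the uniform distance of their headings and the difference of
  their lengths.

  For 0 \<le> \<alpha> \<le> 3\<pi>/2 consider the path starting at 0 in direction 1 that turns right through \<alpha>,
  runs straight for 2 - 2 cos \<alpha>, turns left through 3\<pi>/2, runs straight for 2 + 2 sin \<alpha> and
  turns right through 3\<pi>/2 - \<alpha>. The two segment lengths are chosen so that the path always ends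
  at -2 in direction 1. For \<alpha> = 3\<pi>/2 it is the RSL path R(3\<pi>/2) S(2) L(3\<pi>/2), for \<alpha> = 0 the LSR
  path L(3\<pi>/2) S(2) R(3\<pi>/2), and its heading and length depend Lipschitz continuously on \<alpha>.
  Letting \<alpha> decrease from 3\<pi>/2 to 0 is therefore a bounded curvature homotopy.\<close>

section \<open>Paths with prescribed heading\<close>

lemma norm_exp_ii_diff_le: "cmod (exp (\<i> * of_real a) - exp (\<i> * of_real b)) \<le> \<bar>a - b\<bar>"
proof -
  have "(cmod (exp (\<i> * of_real a) - exp (\<i> * of_real b)))\<^sup>2 = (cos a - cos b)\<^sup>2 + (sin a - sin b)\<^sup>2"
    by (simp add: cmod_power2 flip: cis_conv_exp)
  also have "\<dots> = 2 - 2 * cos (a - b)"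
    by (simp add: cos_diff power2_eq_square algebra_simps)
  also have "cos (a - b) = 1 - 2 * (sin ((a - b) / 2))\<^sup>2"
    using cos_double_sin[of "(a - b) / 2"]
    by (metis times_divide_eq_right nonzero_mult_div_cancel_left zero_neq_numeral)
  also have "2 - 2 * (1 - 2 * (sin ((a - b) / 2))\<^sup>2) = (2 * \<bar>sin ((a - b) / 2)\<bar>)\<^sup>2"
    by (simp add: power2_eq_square)
  finally have "cmod (exp (\<i> * of_real a) - exp (\<i> * of_real b)) = 2 * \<bar>sin ((a - b) / 2)\<bar>"
    by (rule power2_eq_iff_nonneg[THEN iffD1, rotated 2]) simp_all
  then show ?thesis using abs_sin_x_le_abs_x[of "(a - b) / 2"] by simp
qed

lemma abs_cos_diff_le:
  fixes x y :: real
  shows "\<bar>cos x - cos y\<bar> \<le> \<bar>x - y\<bar>"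
  using abs_Re_le_cmod[of "exp (\<i> * of_real x) - exp (\<i> * of_real y)"] norm_exp_ii_diff_le[of x y]
  by (simp flip: cis_conv_exp)

lemma abs_sin_diff_le:
  fixes x y :: real
  shows "\<bar>sin x - sin y\<bar> \<le> \<bar>x - y\<bar>"
  using abs_Im_le_cmod[of "exp (\<i> * of_real x) - exp (\<i> * of_real y)"] norm_exp_ii_diff_le[of x y]
  by (simp flip: cis_conv_exp)

lemma norm_scaled_exp_ii_diff_le:
  assumes "0 \<le> L\<^sub>2"
  shows "norm (of_real L\<^sub>1 * exp (\<i> * of_real a\<^sub>1) - of_real L\<^sub>2 * exp (\<i> * of_real a\<^sub>2))
    \<le> \<bar>L\<^sub>1 - L\<^sub>2\<bar> + L\<^sub>2 * \<bar>a\<^sub>1 - a\<^sub>2\<bar>"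
proof -
  have "of_real L\<^sub>1 * exp (\<i> * of_real a\<^sub>1) - of_real L\<^sub>2 * exp (\<i> * of_real a\<^sub>2)
      = of_real (L\<^sub>1 - L\<^sub>2) * exp (\<i> * of_real a\<^sub>1)
        + of_real L\<^sub>2 * (exp (\<i> * of_real a\<^sub>1) - exp (\<i> * of_real a\<^sub>2))"
    by (simp add: algebra_simps)
  also have "norm \<dots> \<le> \<bar>L\<^sub>1 - L\<^sub>2\<bar> + L\<^sub>2 * norm (exp (\<i> * of_real a\<^sub>1) - exp (\<i> * of_real a\<^sub>2))"
    by (rule order_trans[OF norm_triangle_ineq]) (simp add: norm_mult assms)
  also have "\<dots> \<le> \<bar>L\<^sub>1 - L\<^sub>2\<bar> + L\<^sub>2 * \<bar>a\<^sub>1 - a\<^sub>2\<bar>"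
    using assms norm_exp_ii_diff_le by (simp add: mult_left_mono)
  finally show ?thesis .
qed

lemma tangent_cong:
  assumes "\<forall>t\<in>{0..L}. f t = g t"
  shows "tangent L f = tangent L g"
proof
  fix t
  show "tangent L f t = tangent L g t"
  proof (cases "t \<in> {0..L}")
    case True
    have "(f has_vector_derivative D) (at t within {0..L}) \<longleftrightarrow>
        (g has_vector_derivative D) (at t within {0..L})" for D
      using has_vector_derivative_weaken[of f D t "{0..L}" "{0..L}" g]
        has_vector_derivative_weaken[of g D t "{0..L}" "{0..L}" f] True assms by auto
    then show ?thesis unfolding tangent_def vector_derivative_def by simp
  next
    case False
    then have "at t within {0..L} = bot"
      by (simp add: at_within_eq_bot_iff)
    then have "(h has_vector_derivative D) (at t within {0..L})" for h :: "real \<Rightarrow> complex" and D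
      unfolding has_vector_derivative_def by (simp add: has_derivative_bot bounded_linear_scaleR_left)
    then show ?thesis unfolding tangent_def vector_derivative_def by simp
  qed
qed

lemma bcp_cong:
  assumes "\<forall>t\<in>{0..L}. f t = g t" "bcp x X y Y L f"
  shows "bcp x X y Y L g"
proof -
  have "g differentiable_on {0..L}"
    unfolding differentiable_on_def
  proof
    fix t assume t: "t \<in> {0..L}"
    have "f differentiable at t within {0..L}"
      using assms(2) t unfolding bcp_def differentiable_on_def by blast
    then show "g differentiable at t within {0..L}"
      by (rule differentiable_transform_within[OF _ zero_less_one t]) (use assms(1) in blast)
  qed
  then show ?thesis
    using assms unfolding bcp_def tangent_cong[OF assms(1)] by auto
qed

lemma c1_close_cong:
  assumes "\<forall>t\<in>{0..L}. f t = g t" "0 \<le> L"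
  shows "c1_close e (L, f) R \<longleftrightarrow> c1_close e (L, g) R" "c1_close e R (L, f) \<longleftrightarrow> c1_close e R (L, g)"
proof -
  have scaled: "L * t \<in> {0..L}" if "t \<in> {0..1}" for t
    using assms(2) that by (auto simp: mult_left_le)
  show "c1_close e (L, f) R \<longleftrightarrow> c1_close e (L, g) R"
    unfolding c1_close_def fst_conv snd_conv tangent_cong[OF assms(1)] using scaled assms(1) by auto
  show "c1_close e R (L, f) \<longleftrightarrow> c1_close e R (L, g)"
    unfolding c1_close_def fst_conv snd_conv tangent_cong[OF assms(1)] using scaled assms(1) by auto
qed

definition heading_path :: "(real \<Rightarrow> real) \<Rightarrow> real \<Rightarrow> complex" where
  "heading_path \<theta> t = integral {0..t} (\<lambda>s. exp (\<i> * of_real (\<theta> s)))"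

lemma continuous_on_exp_heading:
  "continuous_on S \<theta> \<Longrightarrow> continuous_on S (\<lambda>s. exp (\<i> * of_real (\<theta> s)))"
  by (intro continuous_intros)

lemma heading_path_has_vector_derivative:
  assumes "continuous_on {0..L} \<theta>" "t \<in> {0..L}"
  shows "(heading_path \<theta> has_vector_derivative exp (\<i> * of_real (\<theta> t))) (at t within {0..L})"
  unfolding heading_path_def
  by (rule integral_has_vector_derivative[OF continuous_on_exp_heading]) (use assms in auto)

lemma tangent_heading_path:
  assumes "continuous_on {0..L} \<theta>" "t \<in> {0..L}" "0 < L"
  shows "tangent L (heading_path \<theta>) t = exp (\<i> * of_real (\<theta> t))"
  unfolding tangent_def
  by (rule vector_derivative_within_closed_interval[OF assms(3,2)
        heading_path_has_vector_derivative[OF assms(1,2)]])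

lemma heading_path_split:
  assumes "continuous_on {0..b} \<theta>" "0 \<le> a" "a \<le> b"
  shows "heading_path \<theta> b = heading_path \<theta> a + integral {a..b} (\<lambda>s. exp (\<i> * of_real (\<theta> s)))"
proof -
  have "(\<lambda>s. exp (\<i> * of_real (\<theta> s))) integrable_on {0..b}"
    by (rule integrable_continuous_interval continuous_on_exp_heading assms(1))+
  from Henstock_Kurzweil_Integration.integral_combine[OF assms(2,3) this] show ?thesis
    unfolding heading_path_def by simp
qed

lemma norm_heading_path_diff_le:
  assumes "continuous_on {0..t} \<theta>" "0 \<le> s" "s \<le> t"
  shows "norm (heading_path \<theta> t - heading_path \<theta> s) \<le> t - s"
proof -
  have "continuous_on {s..t} (\<lambda>s. exp (\<i> * of_real (\<theta> s)))"
    using continuous_on_subset[OF assms(1)] assms(2) by (auto intro!: continuous_on_exp_heading)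
  then have "norm (integral {s..t} (\<lambda>s. exp (\<i> * of_real (\<theta> s)))) \<le> 1 * (t - s)"
    by (intro integral_bound assms(3)) auto
  then show ?thesis using heading_path_split[OF assms] by simp
qed

lemma norm_heading_path_diff_headings_le:
  assumes "continuous_on {0..s} \<theta>\<^sub>1" "continuous_on {0..s} \<theta>\<^sub>2"
    and "\<And>r. r \<in> {0..s} \<Longrightarrow> \<bar>\<theta>\<^sub>1 r - \<theta>\<^sub>2 r\<bar> \<le> B" and "0 \<le> s"
  shows "norm (heading_path \<theta>\<^sub>1 s - heading_path \<theta>\<^sub>2 s) \<le> B * s"
proof -
  have "heading_path \<theta>\<^sub>1 s - heading_path \<theta>\<^sub>2 s
      = integral {0..s} (\<lambda>r. exp (\<i> * of_real (\<theta>\<^sub>1 r)) - exp (\<i> * of_real (\<theta>\<^sub>2 r)))"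
    unfolding heading_path_def
    by (rule integral_diff[symmetric];
        intro integrable_continuous_interval continuous_on_exp_heading assms)
  also have "norm \<dots> \<le> B * (s - 0)"
    by (rule integral_bound)
      (use assms in \<open>auto intro!: continuous_intros continuous_on_exp_heading
          order_trans[OF norm_exp_ii_diff_le]\<close>)
  finally show ?thesis by simp
qed

lemma norm_heading_path_dist_le:
  assumes "continuous_on {0..max s\<^sub>1 s\<^sub>2} \<theta>\<^sub>1" "continuous_on {0..max s\<^sub>1 s\<^sub>2} \<theta>\<^sub>2"
    and "\<And>r. r \<in> {0..s\<^sub>1} \<Longrightarrow> \<bar>\<theta>\<^sub>1 r - \<theta>\<^sub>2 r\<bar> \<le> B" and "0 \<le> s\<^sub>1" "0 \<le> s\<^sub>2"
  shows "norm (heading_path \<theta>\<^sub>1 s\<^sub>1 - heading_path \<theta>\<^sub>2 s\<^sub>2) \<le> B * s\<^sub>1 + \<bar>s\<^sub>1 - s\<^sub>2\<bar>"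
proof -
  have "norm (heading_path \<theta>\<^sub>1 s\<^sub>1 - heading_path \<theta>\<^sub>2 s\<^sub>1) \<le> B * s\<^sub>1"
    by (rule norm_heading_path_diff_headings_le)
      (use assms in \<open>auto elim!: continuous_on_subset\<close>)
  moreover have "norm (heading_path \<theta>\<^sub>2 s\<^sub>1 - heading_path \<theta>\<^sub>2 s\<^sub>2) \<le> \<bar>s\<^sub>1 - s\<^sub>2\<bar>"
  proof (cases "s\<^sub>1 \<le> s\<^sub>2")
    case True
    then show ?thesis
      using norm_heading_path_diff_le[of s\<^sub>2 \<theta>\<^sub>2 s\<^sub>1] assms(2,4) by (simp add: norm_minus_commute)
  next
    case False
    then show ?thesis
      using norm_heading_path_diff_le[of s\<^sub>1 \<theta>\<^sub>2 s\<^sub>2] assms(2,5) by simp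
  qed
  ultimately show ?thesis
    using norm_triangle_ineq[of "heading_path \<theta>\<^sub>1 s\<^sub>1 - heading_path \<theta>\<^sub>2 s\<^sub>1"
        "heading_path \<theta>\<^sub>2 s\<^sub>1 - heading_path \<theta>\<^sub>2 s\<^sub>2"] by simp
qed

lemma exp_affine_has_vector_derivative:
  "((\<lambda>s. exp (\<i> * of_real (c + \<sigma> * s))) has_vector_derivative
     \<i> * of_real \<sigma> * exp (\<i> * of_real (c + \<sigma> * t))) (at t)"
proof -
  have "((\<lambda>z. exp (\<i> * (of_real c + of_real \<sigma> * z))) has_field_derivative
         exp (\<i> * (of_real c + of_real \<sigma> * of_real t)) * (\<i> * of_real \<sigma>)) (at (of_real t))"
    by (auto intro!: derivative_eq_intros)
  from has_vector_derivative_real_field[OF this] show ?thesis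
    by (simp add: ac_simps)
qed

lemma integral_exp_affine_heading:
  assumes "u \<le> v" "\<And>s. s \<in> {u..v} \<Longrightarrow> \<theta> s = c + \<sigma> * s" "\<sigma> \<noteq> 0"
  shows "integral {u..v} (\<lambda>s. exp (\<i> * of_real (\<theta> s))) =
    (exp (\<i> * of_real (c + \<sigma> * v)) - exp (\<i> * of_real (c + \<sigma> * u))) / (\<i> * of_real \<sigma>)"
proof -
  have "((\<lambda>z. exp (\<i> * (of_real c + of_real \<sigma> * z)) / (\<i> * of_real \<sigma>)) has_field_derivative
      exp (\<i> * of_real (c + \<sigma> * s))) (at (of_real s))" for s
    using assms(3) by (auto intro!: derivative_eq_intros simp: field_simps)
  then have "((\<lambda>s. exp (\<i> * of_real (c + \<sigma> * s)) / (\<i> * of_real \<sigma>)) has_vector_derivative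
      exp (\<i> * of_real (c + \<sigma> * s))) (at s within {u..v})" for s
    using has_vector_derivative_real_field by fastforce
  from fundamental_theorem_of_calculus[OF assms(1) this]
  have "((\<lambda>s. exp (\<i> * of_real (\<theta> s))) has_integral
      (exp (\<i> * of_real (c + \<sigma> * v)) - exp (\<i> * of_real (c + \<sigma> * u))) / (\<i> * of_real \<sigma>)) {u..v}"
    by (intro has_integral_eq[of _ _ "\<lambda>s. exp (\<i> * of_real (\<theta> s))"]) (simp_all add: assms(2) diff_divide_distrib)
  then show ?thesis by (rule integral_unique)
qed

lemma integral_exp_const_heading:
  assumes "u \<le> v" "\<And>s. s \<in> {u..v} \<Longrightarrow> \<theta> s = c"
  shows "integral {u..v} (\<lambda>s. exp (\<i> * of_real (\<theta> s))) = of_real (v - u) * exp (\<i> * of_real c)"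
proof -
  have "integral {u..v} (\<lambda>s. exp (\<i> * of_real (\<theta> s))) = integral {u..v} (\<lambda>s. exp (\<i> * of_real c))"
    using assms(2) by (intro integral_cong) auto
  then show ?thesis using assms(1) by (simp add: scaleR_conv_of_real)
qed

text \<open>Near t the path is a segment or a circular arc of radius 1 / \<bar>\<sigma>\<bar> \<ge> 1.\<close>
definition locally_affine_heading :: "(real \<Rightarrow> real) \<Rightarrow> real \<Rightarrow> bool" where
  "locally_affine_heading \<theta> t \<longleftrightarrow>
     (\<exists>d>0. \<exists>c \<sigma>. \<bar>\<sigma>\<bar> \<le> 1 \<and> (\<forall>s. \<bar>s - t\<bar> < d \<longrightarrow> \<theta> s = c + \<sigma> * s))"

lemma locally_affine_headingI:
  assumes "lo < t" "t < hi" "\<bar>\<sigma>\<bar> \<le> 1" "\<And>s. lo < s \<Longrightarrow> s < hi \<Longrightarrow> \<theta> s = c + \<sigma> * s"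
  shows "locally_affine_heading \<theta> t"
  unfolding locally_affine_heading_def
proof (intro exI conjI allI impI)
  show "0 < min (t - lo) (hi - t)" using assms by simp
  fix s assume "\<bar>s - t\<bar> < min (t - lo) (hi - t)"
  then show "\<theta> s = c + \<sigma> * s" using assms(4) by (simp add: abs_less_iff)
qed (fact assms(3))

lemma C1_near_locally_affine_heading:
  assumes "locally_affine_heading \<theta> t"
    and "\<forall>\<^sub>F s in nhds t. f s = exp (\<i> * of_real (\<theta> s))"
  shows "f differentiable at t" "isCont (\<lambda>s. vector_derivative f (at s)) t"
    "norm (vector_derivative f (at t)) \<le> 1"
proof -
  obtain d c \<sigma> where "d > 0" "\<bar>\<sigma>\<bar> \<le> 1" and aff: "\<forall>s. \<bar>s - t\<bar> < d \<longrightarrow> \<theta> s = c + \<sigma> * s"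
    using assms(1) unfolding locally_affine_heading_def by blast
  define f' where "f' s = \<i> * of_real \<sigma> * exp (\<i> * of_real (c + \<sigma> * s))" for s
  have "\<forall>\<^sub>F s in nhds t. s \<in> ball t d"
    using \<open>d > 0\<close> by (intro eventually_nhds_in_open) auto
  with assms(2) have "\<forall>\<^sub>F s in nhds t. f s = exp (\<i> * of_real (c + \<sigma> * s))"
    by eventually_elim (use aff in \<open>auto simp: dist_real_def abs_minus_commute\<close>)
  then obtain U where U: "open U" "t \<in> U" "\<And>s. s \<in> U \<Longrightarrow> f s = exp (\<i> * of_real (c + \<sigma> * s))"
    unfolding eventually_nhds by blast
  have deriv: "(f has_vector_derivative f' s) (at s)" if "s \<in> U" for s
    unfolding f'_def
    by (rule has_vector_derivative_transform_within_open[OF exp_affine_has_vector_derivative U(1) that])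
      (use U(3) in auto)
  then show "f differentiable at t"
    using U(2) differentiableI_vector by blast
  have "\<forall>\<^sub>F s in nhds t. s \<in> U"
    using U(1,2) by (rule eventually_nhds_in_open)
  then have "\<forall>\<^sub>F s in nhds t. vector_derivative f (at s) = f' s"
    by eventually_elim (rule vector_derivative_at[OF deriv])
  moreover have "isCont f' t"
    unfolding f'_def by (intro continuous_intros)
  ultimately show "isCont (\<lambda>s. vector_derivative f (at s)) t"
    by (simp add: isCont_cong)
  show "norm (vector_derivative f (at t)) \<le> 1"
    using vector_derivative_at[OF deriv[OF U(2)]] \<open>\<bar>\<sigma>\<bar> \<le> 1\<close> by (simp add: f'_def norm_mult)
qed

lemma bcp_heading_path:
  assumes "continuous_on {0..L} \<theta>" "0 < L" "finite K"
    and "\<And>t. t \<in> {0<..<L} - K \<Longrightarrow> locally_affine_heading \<theta> t"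
  shows "bcp 0 (exp (\<i> * of_real (\<theta> 0))) (heading_path \<theta> L) (exp (\<i> * of_real (\<theta> L))) L
    (heading_path \<theta>)"
proof -
  have tangent: "tangent L (heading_path \<theta>) t = exp (\<i> * of_real (\<theta> t))" if "t \<in> {0..L}" for t
    using tangent_heading_path[OF assms(1) that assms(2)] .
  have C1: "tangent L (heading_path \<theta>) differentiable at t \<and>
      isCont (\<lambda>s. vector_derivative (tangent L (heading_path \<theta>)) (at s)) t \<and>
      norm (vector_derivative (tangent L (heading_path \<theta>)) (at t)) \<le> 1"
    if t: "t \<in> {0<..<L} - K" for t
  proof -
    have "\<forall>\<^sub>F s in nhds t. s \<in> {0<..<L}"
      using t by (intro eventually_nhds_in_open) auto
    then have "\<forall>\<^sub>F s in nhds t. tangent L (heading_path \<theta>) s = exp (\<i> * of_real (\<theta> s))"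
      by eventually_elim (simp add: tangent)
    from C1_near_locally_affine_heading[OF assms(4)[OF t] this] show ?thesis by blast
  qed
  have "heading_path \<theta> differentiable_on {0..L}"
    unfolding differentiable_on_def
    using heading_path_has_vector_derivative[OF assms(1)] differentiableI_vector by blast
  moreover have "continuous_on {0..L} (tangent L (heading_path \<theta>))"
    using continuous_on_exp_heading[OF assms(1)] by (rule continuous_on_eq) (simp add: tangent)
  moreover have "tangent L (heading_path \<theta>) C1_differentiable_on ({0<..<L} - K)"
    unfolding C1_differentiable_on_eq using C1 by (auto intro: continuous_at_imp_continuous_on)
  ultimately show ?thesis
    unfolding bcp_def using C1 assms(2,3)
    by (intro conjI exI[of _ K] ballI) (simp_all add: tangent heading_path_def)
qed

lemma c1_dist_heading_paths_le:
  fixes \<theta>\<^sub>1 \<theta>\<^sub>2 :: "real \<Rightarrow> real"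
  assumes lip: "1-lipschitz_on UNIV \<theta>\<^sub>1" "1-lipschitz_on UNIV \<theta>\<^sub>2"
    and heading_diff: "\<And>r. \<bar>\<theta>\<^sub>1 r - \<theta>\<^sub>2 r\<bar> \<le> B" and length_diff: "\<bar>L\<^sub>1 - L\<^sub>2\<bar> \<le> B"
    and lengths: "0 < L\<^sub>1" "L\<^sub>1 \<le> M" "0 < L\<^sub>2" "L\<^sub>2 \<le> M" and t: "t \<in> {0..1}"
  shows "norm (heading_path \<theta>\<^sub>1 (L\<^sub>1 * t) - heading_path \<theta>\<^sub>2 (L\<^sub>2 * t))
    + norm (of_real L\<^sub>1 * tangent L\<^sub>1 (heading_path \<theta>\<^sub>1) (L\<^sub>1 * t)
      - of_real L\<^sub>2 * tangent L\<^sub>2 (heading_path \<theta>\<^sub>2) (L\<^sub>2 * t)) \<le> (3 * M + 2) * B"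
proof -
  have cont: "continuous_on S \<theta>\<^sub>1" "continuous_on S \<theta>\<^sub>2" for S
    using lipschitz_on_continuous_on[OF lip(1)] lipschitz_on_continuous_on[OF lip(2)]
      continuous_on_subset by blast+
  have "0 \<le> B" "0 \<le> M" using length_diff lengths by linarith+
  define s\<^sub>1 s\<^sub>2 where "s\<^sub>1 = L\<^sub>1 * t" and "s\<^sub>2 = L\<^sub>2 * t"
  have s_bounds: "0 \<le> s\<^sub>1" "s\<^sub>1 \<le> L\<^sub>1" "s\<^sub>1 \<le> M" "0 \<le> s\<^sub>2" "s\<^sub>2 \<le> L\<^sub>2"
    using t lengths by (auto simp: s\<^sub>1_def s\<^sub>2_def mult_left_le intro: order_trans[OF mult_left_le])
  have "\<bar>s\<^sub>1 - s\<^sub>2\<bar> \<le> \<bar>L\<^sub>1 - L\<^sub>2\<bar>"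
    using t by (simp add: s\<^sub>1_def s\<^sub>2_def abs_mult mult_left_le flip: left_diff_distrib)
  with length_diff have "\<bar>s\<^sub>1 - s\<^sub>2\<bar> \<le> B" by linarith
  have "norm (heading_path \<theta>\<^sub>1 s\<^sub>1 - heading_path \<theta>\<^sub>2 s\<^sub>2) \<le> B * s\<^sub>1 + \<bar>s\<^sub>1 - s\<^sub>2\<bar>"
    using s_bounds heading_diff by (intro norm_heading_path_dist_le cont) auto
  also have "\<dots> \<le> B * M + B"
    using s_bounds \<open>\<bar>s\<^sub>1 - s\<^sub>2\<bar> \<le> B\<close> \<open>0 \<le> B\<close> by (intro add_mono mult_left_mono) auto
  finally have position: "norm (heading_path \<theta>\<^sub>1 s\<^sub>1 - heading_path \<theta>\<^sub>2 s\<^sub>2) \<le> B * M + B" .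
  have "\<bar>\<theta>\<^sub>2 s\<^sub>1 - \<theta>\<^sub>2 s\<^sub>2\<bar> \<le> \<bar>s\<^sub>1 - s\<^sub>2\<bar>"
    using lipschitz_onD[OF lip(2), of s\<^sub>1 s\<^sub>2] by (simp add: dist_real_def)
  then have "\<bar>\<theta>\<^sub>1 s\<^sub>1 - \<theta>\<^sub>2 s\<^sub>2\<bar> \<le> B + B"
    using heading_diff[of s\<^sub>1] \<open>\<bar>s\<^sub>1 - s\<^sub>2\<bar> \<le> B\<close> by linarith
  then have "\<bar>L\<^sub>1 - L\<^sub>2\<bar> + L\<^sub>2 * \<bar>\<theta>\<^sub>1 s\<^sub>1 - \<theta>\<^sub>2 s\<^sub>2\<bar> \<le> B + M * (B + B)"
    using length_diff lengths by (intro add_mono mult_mono) auto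
  then have direction: "norm (of_real L\<^sub>1 * tangent L\<^sub>1 (heading_path \<theta>\<^sub>1) s\<^sub>1
      - of_real L\<^sub>2 * tangent L\<^sub>2 (heading_path \<theta>\<^sub>2) s\<^sub>2) \<le> B + M * (B + B)"
    using norm_scaled_exp_ii_diff_le[of L\<^sub>2 L\<^sub>1 "\<theta>\<^sub>1 s\<^sub>1" "\<theta>\<^sub>2 s\<^sub>2"] s_bounds lengths
    by (simp add: tangent_heading_path cont)
  have "(B * M + B) + (B + M * (B + B)) = (3 * M + 2) * B"
    by (simp add: algebra_simps)
  with position direction show ?thesis
    unfolding s\<^sub>1_def s\<^sub>2_def by linarith
qed

lemma c1_close_heading_paths:
  fixes \<Theta> :: "real \<Rightarrow> real \<Rightarrow> real" and \<Lambda> :: "real \<Rightarrow> real"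
  assumes lip: "\<And>p. p \<in> P \<Longrightarrow> 1-lipschitz_on UNIV (\<Theta> p)"
    and heading_diff: "\<And>p q s. p \<in> P \<Longrightarrow> q \<in> P \<Longrightarrow> \<bar>\<Theta> p s - \<Theta> q s\<bar> \<le> M * \<bar>p - q\<bar>"
    and length_diff: "\<And>p q. p \<in> P \<Longrightarrow> q \<in> P \<Longrightarrow> \<bar>\<Lambda> p - \<Lambda> q\<bar> \<le> M * \<bar>p - q\<bar>"
    and length_bounds: "\<And>p. p \<in> P \<Longrightarrow> 0 < \<Lambda> p \<and> \<Lambda> p \<le> M"
    and p: "p \<in> P" and "0 < e"
  shows "\<exists>d>0. \<forall>q\<in>P. \<bar>q - p\<bar> < d \<longrightarrow>
    c1_close e (\<Lambda> q, heading_path (\<Theta> q)) (\<Lambda> p, heading_path (\<Theta> p))"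
proof -
  have "0 \<le> M" using length_bounds[OF p] by linarith
  define C where "C = (3 * M + 2) * M + 1"
  have "0 < C" unfolding C_def using \<open>0 \<le> M\<close> by (simp add: add_nonneg_pos)
  show ?thesis
  proof (intro exI conjI ballI impI)
    show "0 < e / C" using \<open>0 < e\<close> \<open>0 < C\<close> by simp
    fix q assume q: "q \<in> P" "\<bar>q - p\<bar> < e / C"
    have "(3 * M + 2) * (M * \<bar>q - p\<bar>) \<le> C * \<bar>q - p\<bar>"
      unfolding C_def by (simp add: algebra_simps)
    also have "\<dots> < e"
      using q(2) \<open>0 < C\<close> by (simp add: field_simps)
    finally have small: "(3 * M + 2) * (M * \<bar>q - p\<bar>) < e" .
    show "c1_close e (\<Lambda> q, heading_path (\<Theta> q)) (\<Lambda> p, heading_path (\<Theta> p))"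
      unfolding c1_close_def fst_conv snd_conv
    proof
      fix t :: real assume "t \<in> {0..1}"
      with length_bounds[OF q(1)] length_bounds[OF p]
      have "norm (heading_path (\<Theta> q) (\<Lambda> q * t) - heading_path (\<Theta> p) (\<Lambda> p * t))
          + norm (of_real (\<Lambda> q) * tangent (\<Lambda> q) (heading_path (\<Theta> q)) (\<Lambda> q * t)
            - of_real (\<Lambda> p) * tangent (\<Lambda> p) (heading_path (\<Theta> p)) (\<Lambda> p * t))
          \<le> (3 * M + 2) * (M * \<bar>q - p\<bar>)"
        by (intro c1_dist_heading_paths_le lip heading_diff length_diff q(1) p) auto
      with small show "norm (heading_path (\<Theta> q) (\<Lambda> q * t) - heading_path (\<Theta> p) (\<Lambda> p * t))
          + norm (of_real (\<Lambda> q) * tangent (\<Lambda> q) (heading_path (\<Theta> q)) (\<Lambda> q * t)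
            - of_real (\<Lambda> p) * tangent (\<Lambda> p) (heading_path (\<Theta> p)) (\<Lambda> p * t)) < e"
        by linarith
    qed
  qed
qed


section \<open>Headings of RSLSR paths\<close>

lemma lipschitz_on_affine:
  fixes \<theta> :: "real \<Rightarrow> real"
  assumes "\<bar>\<sigma>\<bar> \<le> 1" "\<And>s. s \<in> U \<Longrightarrow> \<theta> s = c + \<sigma> * s"
  shows "1-lipschitz_on U \<theta>"
proof (rule lipschitz_onI)
  fix x y assume "x \<in> U" "y \<in> U"
  then have "dist (\<theta> x) (\<theta> y) = \<bar>\<sigma>\<bar> * dist x y"
    using assms(2) by (simp add: dist_real_def abs_mult flip: right_diff_distrib)
  then show "dist (\<theta> x) (\<theta> y) \<le> 1 * dist x y"
    using assms(1) by (simp add: mult_left_le_one_le)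
qed simp

lemma abs_min_diff_le:
  fixes s a a' :: real
  shows "\<bar>min s a - min s a'\<bar> \<le> \<bar>a - a'\<bar>"
  by (simp add: min_def abs_if)

lemma abs_clamp_diff_le:
  fixes g g' x x' :: real
  shows "\<bar>min g (max 0 x) - min g' (max 0 x')\<bar> \<le> \<bar>g - g'\<bar> + \<bar>x - x'\<bar>"
  by (simp add: min_def max_def abs_if)

lemma abs_sum3_le:
  fixes a b c :: real
  shows "\<bar>a + b + c\<bar> \<le> \<bar>a\<bar> + \<bar>b\<bar> + \<bar>c\<bar>"
  using abs_triangle_ineq[of "a + b" c] abs_triangle_ineq[of a b] by linarith

text \<open>Heading of the path that turns right through \<alpha> on [0, \<alpha>], runs straight until time A,
  turns left through \<gamma>, runs straight until time C and turns right through \<epsilon>.\<close>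
definition rslsr_heading :: "real \<Rightarrow> real \<Rightarrow> real \<Rightarrow> real \<Rightarrow> real \<Rightarrow> real \<Rightarrow> real" where
  "rslsr_heading \<alpha> A \<gamma> C \<epsilon> s = - min s \<alpha> + min \<gamma> (max 0 (s - A)) - min \<epsilon> (max 0 (s - C))"

lemma rslsr_heading_diff_le:
  "\<bar>rslsr_heading \<alpha> A \<gamma> C \<epsilon> s - rslsr_heading \<alpha>' A' \<gamma> C' \<epsilon>' s\<bar>
    \<le> \<bar>\<alpha> - \<alpha>'\<bar> + \<bar>A - A'\<bar> + \<bar>C - C'\<bar> + \<bar>\<epsilon> - \<epsilon>'\<bar>"
proof -
  have "rslsr_heading \<alpha> A \<gamma> C \<epsilon> s - rslsr_heading \<alpha>' A' \<gamma> C' \<epsilon>' s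
      = (min s \<alpha>' - min s \<alpha>) + (min \<gamma> (max 0 (s - A)) - min \<gamma> (max 0 (s - A')))
        + (min \<epsilon>' (max 0 (s - C')) - min \<epsilon> (max 0 (s - C)))"
    by (simp add: rslsr_heading_def)
  moreover have "\<bar>min s \<alpha>' - min s \<alpha>\<bar> \<le> \<bar>\<alpha> - \<alpha>'\<bar>"
    using abs_min_diff_le[of s \<alpha>' \<alpha>] abs_minus_commute[of \<alpha>' \<alpha>] by linarith
  moreover have "\<bar>min \<gamma> (max 0 (s - A)) - min \<gamma> (max 0 (s - A'))\<bar> \<le> \<bar>A - A'\<bar>"
    using abs_clamp_diff_le[of \<gamma> "s - A" \<gamma> "s - A'"] abs_minus_commute[of A' A] by simp
  moreover have "\<bar>min \<epsilon>' (max 0 (s - C')) - min \<epsilon> (max 0 (s - C))\<bar> \<le> \<bar>C - C'\<bar> + \<bar>\<epsilon> - \<epsilon>'\<bar>"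
    using abs_clamp_diff_le[of \<epsilon>' "s - C'" \<epsilon> "s - C"] abs_minus_commute[of \<epsilon>' \<epsilon>] by simp
  ultimately show ?thesis
    using abs_sum3_le by (smt (verit))
qed

context
  fixes \<alpha> A \<gamma> C \<epsilon> :: real
  assumes order: "0 \<le> \<alpha>" "\<alpha> \<le> A" "0 \<le> \<gamma>" "A + \<gamma> \<le> C" "0 \<le> \<epsilon>"
begin

lemma rslsr_heading_R1: "s \<le> \<alpha> \<Longrightarrow> rslsr_heading \<alpha> A \<gamma> C \<epsilon> s = - s"
  and rslsr_heading_S1: "\<alpha> \<le> s \<Longrightarrow> s \<le> A \<Longrightarrow> rslsr_heading \<alpha> A \<gamma> C \<epsilon> s = - \<alpha>"
  and rslsr_heading_L: "A \<le> s \<Longrightarrow> s \<le> A + \<gamma> \<Longrightarrow> rslsr_heading \<alpha> A \<gamma> C \<epsilon> s = - \<alpha> - A + s"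
  and rslsr_heading_S2: "A + \<gamma> \<le> s \<Longrightarrow> s \<le> C \<Longrightarrow> rslsr_heading \<alpha> A \<gamma> C \<epsilon> s = - \<alpha> + \<gamma>"
  and rslsr_heading_R2: "C \<le> s \<Longrightarrow> s \<le> C + \<epsilon> \<Longrightarrow> rslsr_heading \<alpha> A \<gamma> C \<epsilon> s = - \<alpha> + \<gamma> + C - s"
  and rslsr_heading_end: "C + \<epsilon> \<le> s \<Longrightarrow> rslsr_heading \<alpha> A \<gamma> C \<epsilon> s = - \<alpha> + \<gamma> - \<epsilon>"
  using order by (simp_all add: rslsr_heading_def min_def max_def)

lemma rslsr_heading_lipschitz: "1-lipschitz_on UNIV (rslsr_heading \<alpha> A \<gamma> C \<epsilon>)"
proof -
  let ?\<theta> = "rslsr_heading \<alpha> A \<gamma> C \<epsilon>"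
  let ?pieces = "{{..\<alpha>}, {\<alpha>..A}, {A..A + \<gamma>}, {A + \<gamma>..C}, {C..C + \<epsilon>}, {C + \<epsilon>..}}"
  have "1-lipschitz_on {..\<alpha>} ?\<theta>"
    by (rule lipschitz_on_affine[of "-1" _ _ 0]) (simp_all add: rslsr_heading_R1)
  moreover have "1-lipschitz_on {\<alpha>..A} ?\<theta>"
    by (rule lipschitz_on_affine[of 0 _ _ "-\<alpha>"]) (simp_all add: rslsr_heading_S1)
  moreover have "1-lipschitz_on {A..A + \<gamma>} ?\<theta>"
    by (rule lipschitz_on_affine[of 1 _ _ "-\<alpha> - A"]) (simp_all add: rslsr_heading_L)
  moreover have "1-lipschitz_on {A + \<gamma>..C} ?\<theta>"
    by (rule lipschitz_on_affine[of 0 _ _ "-\<alpha> + \<gamma>"]) (simp_all add: rslsr_heading_S2)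
  moreover have "1-lipschitz_on {C..C + \<epsilon>} ?\<theta>"
    by (rule lipschitz_on_affine[of "-1" _ _ "-\<alpha> + \<gamma> + C"]) (simp_all add: rslsr_heading_R2)
  moreover have "1-lipschitz_on {C + \<epsilon>..} ?\<theta>"
    by (rule lipschitz_on_affine[of 0 _ _ "-\<alpha> + \<gamma> - \<epsilon>"]) (simp_all add: rslsr_heading_end)
  ultimately have "1-lipschitz_on I ?\<theta>" if "I \<in> ?pieces" for I
    using that by blast
  then have interval: "1-lipschitz_on {u..v} ?\<theta>" for u v
  proof (intro lipschitz_on_closed_Union[where U = id])
    have "x \<in> \<Union> ?pieces" for x
      using order by (cases "x \<le> \<alpha>"; cases "x \<le> A"; cases "x \<le> A + \<gamma>"; cases "x \<le> C"; cases "x \<le> C + \<epsilon>") auto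
    then show "{u..v} \<subseteq> (\<Union>I\<in>?pieces. id I)" by auto
  qed auto
  show ?thesis
  proof (rule lipschitz_onI)
    fix x y :: real
    show "dist (?\<theta> x) (?\<theta> y) \<le> 1 * dist x y"
      by (rule lipschitz_onD[OF interval[of "min x y" "max x y"]]) auto
  qed simp
qed

lemma rslsr_heading_locally_affine:
  assumes "t \<notin> {\<alpha>, A, A + \<gamma>, C, C + \<epsilon>}"
  shows "locally_affine_heading (rslsr_heading \<alpha> A \<gamma> C \<epsilon>) t"
proof -
  consider "t < \<alpha>" | "\<alpha> < t" "t < A" | "A < t" "t < A + \<gamma>" | "A + \<gamma> < t" "t < C"
    | "C < t" "t < C + \<epsilon>" | "C + \<epsilon> < t"
    using assms by fastforce
  then show ?thesis
  proof cases
    case 1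
    show ?thesis by (rule locally_affine_headingI[of "t - 1" _ \<alpha> "-1" _ 0]) (use 1 rslsr_heading_R1 in auto)
  next
    case 2
    show ?thesis by (rule locally_affine_headingI[of \<alpha> _ A 0 _ "-\<alpha>"]) (use 2 rslsr_heading_S1 in auto)
  next
    case 3
    show ?thesis by (rule locally_affine_headingI[of A _ "A + \<gamma>" 1 _ "-\<alpha> - A"]) (use 3 rslsr_heading_L in auto)
  next
    case 4
    show ?thesis by (rule locally_affine_headingI[of "A + \<gamma>" _ C 0 _ "-\<alpha> + \<gamma>"]) (use 4 rslsr_heading_S2 in auto)
  next
    case 5
    show ?thesis
      by (rule locally_affine_headingI[of C _ "C + \<epsilon>" "-1" _ "-\<alpha> + \<gamma> + C"]) (use 5 rslsr_heading_R2 in auto)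
  next
    case 6
    show ?thesis
      by (rule locally_affine_headingI[of "C + \<epsilon>" _ "t + 1" 0 _ "-\<alpha> + \<gamma> - \<epsilon>"]) (use 6 rslsr_heading_end in auto)
  qed
qed

lemma continuous_on_rslsr_heading: "continuous_on S (rslsr_heading \<alpha> A \<gamma> C \<epsilon>)"
  using lipschitz_on_continuous_on[OF rslsr_heading_lipschitz] continuous_on_subset by blast

lemma heading_path_rslsr_R1:
  assumes "0 \<le> t" "t \<le> \<alpha>"
  shows "heading_path (rslsr_heading \<alpha> A \<gamma> C \<epsilon>) t = \<i> * (exp (\<i> * of_real (- t)) - 1)"
proof -
  have "heading_path (rslsr_heading \<alpha> A \<gamma> C \<epsilon>) t
      = integral {0..t} (\<lambda>s. exp (\<i> * of_real (rslsr_heading \<alpha> A \<gamma> C \<epsilon> s)))"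
    by (simp add: heading_path_def)
  also have "\<dots> = (exp (\<i> * of_real (0 + (-1) * t)) - exp (\<i> * of_real (0 + (-1) * 0))) / (\<i> * of_real (-1))"
    by (rule integral_exp_affine_heading) (use assms rslsr_heading_R1 in auto)
  finally show ?thesis by (simp add: field_simps)
qed

lemma heading_path_rslsr_S1:
  assumes "\<alpha> \<le> t" "t \<le> A"
  shows "heading_path (rslsr_heading \<alpha> A \<gamma> C \<epsilon>) t
    = \<i> * (exp (\<i> * of_real (- \<alpha>)) - 1) + of_real (t - \<alpha>) * exp (\<i> * of_real (- \<alpha>))"
proof -
  have "heading_path (rslsr_heading \<alpha> A \<gamma> C \<epsilon>) t = heading_path (rslsr_heading \<alpha> A \<gamma> C \<epsilon>) \<alpha>
      + integral {\<alpha>..t} (\<lambda>s. exp (\<i> * of_real (rslsr_heading \<alpha> A \<gamma> C \<epsilon> s)))"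
    by (rule heading_path_split[OF continuous_on_rslsr_heading]) (use order assms in auto)
  also have "integral {\<alpha>..t} (\<lambda>s. exp (\<i> * of_real (rslsr_heading \<alpha> A \<gamma> C \<epsilon> s)))
      = of_real (t - \<alpha>) * exp (\<i> * of_real (- \<alpha>))"
    by (rule integral_exp_const_heading) (use assms rslsr_heading_S1 in auto)
  finally show ?thesis using heading_path_rslsr_R1[of \<alpha>] order by simp
qed

lemma heading_path_rslsr_L:
  assumes "A \<le> t" "t \<le> A + \<gamma>"
  shows "heading_path (rslsr_heading \<alpha> A \<gamma> C \<epsilon>) t
    = \<i> * (exp (\<i> * of_real (- \<alpha>)) - 1) + of_real (A - \<alpha>) * exp (\<i> * of_real (- \<alpha>))
      - \<i> * (exp (\<i> * of_real (- \<alpha> - A + t)) - exp (\<i> * of_real (- \<alpha>)))"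
proof -
  have "heading_path (rslsr_heading \<alpha> A \<gamma> C \<epsilon>) t = heading_path (rslsr_heading \<alpha> A \<gamma> C \<epsilon>) A
      + integral {A..t} (\<lambda>s. exp (\<i> * of_real (rslsr_heading \<alpha> A \<gamma> C \<epsilon> s)))"
    by (rule heading_path_split[OF continuous_on_rslsr_heading]) (use order assms in auto)
  also have "integral {A..t} (\<lambda>s. exp (\<i> * of_real (rslsr_heading \<alpha> A \<gamma> C \<epsilon> s)))
      = (exp (\<i> * of_real ((- \<alpha> - A) + 1 * t)) - exp (\<i> * of_real ((- \<alpha> - A) + 1 * A))) / (\<i> * of_real 1)"
    by (rule integral_exp_affine_heading) (use assms rslsr_heading_L in auto)
  finally show ?thesis using heading_path_rslsr_S1[of A] order by (simp add: field_simps)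
qed

lemma heading_path_rslsr_S2:
  assumes "A + \<gamma> \<le> t" "t \<le> C"
  shows "heading_path (rslsr_heading \<alpha> A \<gamma> C \<epsilon>) t
    = \<i> * (exp (\<i> * of_real (- \<alpha>)) - 1) + of_real (A - \<alpha>) * exp (\<i> * of_real (- \<alpha>))
      - \<i> * (exp (\<i> * of_real (- \<alpha> + \<gamma>)) - exp (\<i> * of_real (- \<alpha>)))
      + of_real (t - (A + \<gamma>)) * exp (\<i> * of_real (- \<alpha> + \<gamma>))"
proof -
  have "heading_path (rslsr_heading \<alpha> A \<gamma> C \<epsilon>) t = heading_path (rslsr_heading \<alpha> A \<gamma> C \<epsilon>) (A + \<gamma>)
      + integral {A + \<gamma>..t} (\<lambda>s. exp (\<i> * of_real (rslsr_heading \<alpha> A \<gamma> C \<epsilon> s)))"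
    by (rule heading_path_split[OF continuous_on_rslsr_heading]) (use order assms in auto)
  also have "integral {A + \<gamma>..t} (\<lambda>s. exp (\<i> * of_real (rslsr_heading \<alpha> A \<gamma> C \<epsilon> s)))
      = of_real (t - (A + \<gamma>)) * exp (\<i> * of_real (- \<alpha> + \<gamma>))"
    by (rule integral_exp_const_heading) (use assms rslsr_heading_S2 in auto)
  finally show ?thesis using heading_path_rslsr_L[of "A + \<gamma>"] order by simp
qed

lemma heading_path_rslsr_R2:
  assumes "C \<le> t" "t \<le> C + \<epsilon>"
  shows "heading_path (rslsr_heading \<alpha> A \<gamma> C \<epsilon>) t
    = \<i> * (exp (\<i> * of_real (- \<alpha>)) - 1) + of_real (A - \<alpha>) * exp (\<i> * of_real (- \<alpha>))
      - \<i> * (exp (\<i> * of_real (- \<alpha> + \<gamma>)) - exp (\<i> * of_real (- \<alpha>)))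
      + of_real (C - (A + \<gamma>)) * exp (\<i> * of_real (- \<alpha> + \<gamma>))
      + \<i> * (exp (\<i> * of_real (- \<alpha> + \<gamma> + C - t)) - exp (\<i> * of_real (- \<alpha> + \<gamma>)))"
proof -
  have "heading_path (rslsr_heading \<alpha> A \<gamma> C \<epsilon>) t = heading_path (rslsr_heading \<alpha> A \<gamma> C \<epsilon>) C
      + integral {C..t} (\<lambda>s. exp (\<i> * of_real (rslsr_heading \<alpha> A \<gamma> C \<epsilon> s)))"
    by (rule heading_path_split[OF continuous_on_rslsr_heading]) (use order assms in auto)
  also have "integral {C..t} (\<lambda>s. exp (\<i> * of_real (rslsr_heading \<alpha> A \<gamma> C \<epsilon> s)))
      = (exp (\<i> * of_real ((- \<alpha> + \<gamma> + C) + (-1) * t))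
         - exp (\<i> * of_real ((- \<alpha> + \<gamma> + C) + (-1) * C))) / (\<i> * of_real (-1))"
    by (rule integral_exp_affine_heading) (use assms rslsr_heading_R2 in auto)
  finally show ?thesis using heading_path_rslsr_S2[of C] order by (simp add: field_simps)
qed

end


section \<open>Deforming the RSL path into the LSR path\<close>

definition rsl_lsr_heading :: "real \<Rightarrow> real \<Rightarrow> real" where
  "rsl_lsr_heading \<alpha> = rslsr_heading \<alpha> (\<alpha> + 2 - 2 * cos \<alpha>) (3/2 * pi)
     (\<alpha> + 3/2 * pi + 4 - 2 * cos \<alpha> + 2 * sin \<alpha>) (3/2 * pi - \<alpha>)"

definition rsl_lsr_length :: "real \<Rightarrow> real" where
  "rsl_lsr_length \<alpha> = 3 * pi + 4 - 2 * cos \<alpha> + 2 * sin \<alpha>"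

lemma rsl_lsr_order:
  assumes "0 \<le> \<alpha>" "\<alpha> \<le> 3/2 * pi"
  shows "0 \<le> \<alpha>" "\<alpha> \<le> \<alpha> + 2 - 2 * cos \<alpha>" "0 \<le> 3/2 * pi"
    "\<alpha> + 2 - 2 * cos \<alpha> + 3/2 * pi \<le> \<alpha> + 3/2 * pi + 4 - 2 * cos \<alpha> + 2 * sin \<alpha>"
    "0 \<le> 3/2 * pi - \<alpha>"
  using assms cos_le_one[of \<alpha>] sin_ge_minus_one[of \<alpha>] pi_gt_zero by linarith+

lemma rsl_lsr_length_bounds: "0 < rsl_lsr_length \<alpha>" "rsl_lsr_length \<alpha> \<le> 3 * pi + 8"
  using cos_le_one[of \<alpha>] sin_ge_minus_one[of \<alpha>] cos_ge_minus_one[of \<alpha>] sin_le_one[of \<alpha>] pi_gt_zero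
  unfolding rsl_lsr_length_def by linarith+

lemma heading_path_rsl_lsr_end:
  assumes "0 \<le> \<alpha>" "\<alpha> \<le> 3/2 * pi"
  shows "heading_path (rsl_lsr_heading \<alpha>) (rsl_lsr_length \<alpha>) = -2"
proof -
  have "heading_path (rsl_lsr_heading \<alpha>) (rsl_lsr_length \<alpha>)
    = \<i> * (exp (\<i> * of_real (- \<alpha>)) - 1) + of_real (2 - 2 * cos \<alpha>) * exp (\<i> * of_real (- \<alpha>))
      - \<i> * (exp (\<i> * of_real (- \<alpha> + 3/2 * pi)) - exp (\<i> * of_real (- \<alpha>)))
      + of_real (2 + 2 * sin \<alpha>) * exp (\<i> * of_real (- \<alpha> + 3/2 * pi))
      + \<i> * (exp (\<i> * of_real 0) - exp (\<i> * of_real (- \<alpha> + 3/2 * pi)))"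
    unfolding rsl_lsr_heading_def
    by (subst heading_path_rslsr_R2[OF rsl_lsr_order[OF assms]]) (insert assms, simp_all add: rsl_lsr_length_def)
  also have "\<dots> = \<i> * (cis (- \<alpha>) - 1) + of_real (2 - 2 * cos \<alpha>) * cis (- \<alpha>)
      - \<i> * (cis (- \<alpha> + 3/2 * pi) - cis (- \<alpha>)) + of_real (2 + 2 * sin \<alpha>) * cis (- \<alpha> + 3/2 * pi)
      + \<i> * (cis 0 - cis (- \<alpha> + 3/2 * pi))"
    by (simp only: cis_conv_exp)
  also have "\<dots> = -2"
  proof -
    have "cos (- \<alpha> + 3/2 * pi) = - sin \<alpha>" "sin (- \<alpha> + 3/2 * pi) = - cos \<alpha>"
      using cos_3over2_pi sin_3over2_pi by (simp_all add: cos_diff sin_diff)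
    then show ?thesis
      by (simp add: complex_eq_iff algebra_simps) (use sin_cos_squared_add3[of \<alpha>] in algebra)
  qed
  finally show ?thesis .
qed

lemma rsl_lsr_heading_end:
  assumes "0 \<le> \<alpha>" "\<alpha> \<le> 3/2 * pi"
  shows "rsl_lsr_heading \<alpha> (rsl_lsr_length \<alpha>) = 0"
  unfolding rsl_lsr_heading_def
  by (subst rslsr_heading_end[OF rsl_lsr_order[OF assms]]) (insert assms, simp_all add: rsl_lsr_length_def)

lemma bcp_rsl_lsr:
  assumes "0 \<le> \<alpha>" "\<alpha> \<le> 3/2 * pi"
  shows "bcp 0 1 (-2) 1 (rsl_lsr_length \<alpha>) (heading_path (rsl_lsr_heading \<alpha>))"
proof -
  note order = rsl_lsr_order[OF assms]
  have "bcp 0 (exp (\<i> * of_real (rsl_lsr_heading \<alpha> 0))) (heading_path (rsl_lsr_heading \<alpha>) (rsl_lsr_length \<alpha>))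
      (exp (\<i> * of_real (rsl_lsr_heading \<alpha> (rsl_lsr_length \<alpha>)))) (rsl_lsr_length \<alpha>)
      (heading_path (rsl_lsr_heading \<alpha>))"
  proof (rule bcp_heading_path)
    show "continuous_on {0..rsl_lsr_length \<alpha>} (rsl_lsr_heading \<alpha>)"
      unfolding rsl_lsr_heading_def by (rule continuous_on_rslsr_heading[OF order])
    show "0 < rsl_lsr_length \<alpha>" by (rule rsl_lsr_length_bounds)
    let ?K = "{\<alpha>, \<alpha> + 2 - 2 * cos \<alpha>, \<alpha> + 2 - 2 * cos \<alpha> + 3/2 * pi,
      \<alpha> + 3/2 * pi + 4 - 2 * cos \<alpha> + 2 * sin \<alpha>, \<alpha> + 3/2 * pi + 4 - 2 * cos \<alpha> + 2 * sin \<alpha> + (3/2 * pi - \<alpha>)}"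
    show "finite ?K" by simp
    show "locally_affine_heading (rsl_lsr_heading \<alpha>) t" if "t \<in> {0<..<rsl_lsr_length \<alpha>} - ?K" for t
      unfolding rsl_lsr_heading_def using that by (intro rslsr_heading_locally_affine[OF order]) auto
  qed
  moreover have "rsl_lsr_heading \<alpha> 0 = 0"
    unfolding rsl_lsr_heading_def using rslsr_heading_R1[OF order, of 0] assms by simp
  ultimately show ?thesis
    using heading_path_rsl_lsr_end[OF assms] rsl_lsr_heading_end[OF assms] by simp
qed

lemma rsl_lsr_heading_param_diff_le:
  "\<bar>rsl_lsr_heading \<alpha> s - rsl_lsr_heading \<alpha>' s\<bar> \<le> 10 * \<bar>\<alpha> - \<alpha>'\<bar>"
proof -
  have "\<bar>cos \<alpha> - cos \<alpha>'\<bar> \<le> \<bar>\<alpha> - \<alpha>'\<bar>" "\<bar>sin \<alpha> - sin \<alpha>'\<bar> \<le> \<bar>\<alpha> - \<alpha>'\<bar>"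
    by (rule abs_cos_diff_le abs_sin_diff_le)+
  then have "\<bar>(\<alpha> + 2 - 2 * cos \<alpha>) - (\<alpha>' + 2 - 2 * cos \<alpha>')\<bar> \<le> 3 * \<bar>\<alpha> - \<alpha>'\<bar>"
    and "\<bar>(\<alpha> + 3/2 * pi + 4 - 2 * cos \<alpha> + 2 * sin \<alpha>) - (\<alpha>' + 3/2 * pi + 4 - 2 * cos \<alpha>' + 2 * sin \<alpha>')\<bar>
      \<le> 5 * \<bar>\<alpha> - \<alpha>'\<bar>"
    and "\<bar>(3/2 * pi - \<alpha>) - (3/2 * pi - \<alpha>')\<bar> = \<bar>\<alpha> - \<alpha>'\<bar>"
    using abs_ge_self[of "\<alpha> - \<alpha>'"] abs_ge_minus_self[of "\<alpha> - \<alpha>'"]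
    by (simp_all add: abs_le_iff abs_minus_commute)
  then show ?thesis
    using rslsr_heading_diff_le[of \<alpha> "\<alpha> + 2 - 2 * cos \<alpha>" "3/2 * pi"
        "\<alpha> + 3/2 * pi + 4 - 2 * cos \<alpha> + 2 * sin \<alpha>" "3/2 * pi - \<alpha>" s \<alpha>' "\<alpha>' + 2 - 2 * cos \<alpha>'"
        "\<alpha>' + 3/2 * pi + 4 - 2 * cos \<alpha>' + 2 * sin \<alpha>'" "3/2 * pi - \<alpha>'"]
    unfolding rsl_lsr_heading_def by linarith
qed

lemma rsl_lsr_length_diff_le: "\<bar>rsl_lsr_length \<alpha> - rsl_lsr_length \<alpha>'\<bar> \<le> 4 * \<bar>\<alpha> - \<alpha>'\<bar>"
  using abs_cos_diff_le[of \<alpha> \<alpha>'] abs_sin_diff_le[of \<alpha> \<alpha>']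
  by (auto simp: rsl_lsr_length_def abs_le_iff)

lemma heading_path_rsl_lsr_RSL:
  assumes "t \<in> {0..3 * pi + 2}"
  shows "heading_path (rsl_lsr_heading (3/2 * pi)) t = rsl_path 0 1 (3/2 * pi) 2 (3/2 * pi) t"
proof -
  have heading: "rsl_lsr_heading (3/2 * pi) = rslsr_heading (3/2 * pi) (3/2 * pi + 2) (3/2 * pi) (3 * pi + 2) 0"
    unfolding rsl_lsr_heading_def cos_3over2_pi sin_3over2_pi by (simp add: algebra_simps)
  have order: "0 \<le> 3/2 * pi" "3/2 * pi \<le> 3/2 * pi + 2" "0 \<le> 3/2 * pi" "3/2 * pi + 2 + 3/2 * pi \<le> 3 * pi + 2"
    "0 \<le> (0::real)"
    using pi_gt_zero by auto
  consider "t \<le> 3/2 * pi" | "3/2 * pi < t" "t \<le> 3/2 * pi + 2" | "3/2 * pi + 2 < t" by linarith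
  then show ?thesis
  proof cases
    case 1
    then show ?thesis
      using heading_path_rslsr_R1[OF order, of t] assms unfolding heading
      by (simp add: rsl_path_def Let_def arcR_def)
  next
    case 2
    then show ?thesis
      using heading_path_rslsr_S1[OF order, of t] unfolding heading
      by (simp add: rsl_path_def Let_def arcR_def)
  next
    case 3
    have "\<i> * of_real (- (3/2 * pi) - (3/2 * pi + 2) + t)
        = \<i> * of_real (- (3/2 * pi)) + \<i> * of_real (t - 3/2 * pi - 2)"
      by (simp add: algebra_simps)
    then have exp_split: "exp (\<i> * of_real (- (3/2 * pi) - (3/2 * pi + 2) + t))
        = exp (\<i> * of_real (- (3/2 * pi))) * exp (\<i> * of_real (t - 3/2 * pi - 2))"
      by (simp only: exp_add)
    show ?thesis
      using heading_path_rslsr_L[OF order, of t] 3 assms unfolding heading exp_split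
      by (simp add: rsl_path_def Let_def arcR_def arcL_def algebra_simps)
  qed
qed

lemma heading_path_rsl_lsr_LSR:
  assumes "t \<in> {0..3 * pi + 2}"
  shows "heading_path (rsl_lsr_heading 0) t = lsr_path 0 1 (3/2 * pi) 2 (3/2 * pi) t"
proof -
  have heading: "rsl_lsr_heading 0 = rslsr_heading 0 0 (3/2 * pi) (3/2 * pi + 2) (3/2 * pi)"
    by (simp add: rsl_lsr_heading_def algebra_simps)
  have order: "0 \<le> (0::real)" "0 \<le> (0::real)" "0 \<le> 3/2 * pi" "0 + 3/2 * pi \<le> 3/2 * pi + 2"
    "0 \<le> 3/2 * pi"
    using pi_gt_zero by auto
  consider "t \<le> 3/2 * pi" | "3/2 * pi < t" "t \<le> 3/2 * pi + 2" | "3/2 * pi + 2 < t" by linarith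
  then show ?thesis
  proof cases
    case 1
    then show ?thesis
      using heading_path_rslsr_L[OF order, of t] assms unfolding heading
      by (simp add: lsr_path_def Let_def arcL_def algebra_simps)
  next
    case 2
    then show ?thesis
      using heading_path_rslsr_S2[OF order, of t] unfolding heading
      by (simp add: lsr_path_def Let_def arcL_def algebra_simps)
  next
    case 3
    have "\<i> * of_real (- 0 + 3/2 * pi + (3/2 * pi + 2) - t)
        = \<i> * of_real (3/2 * pi) + \<i> * of_real (- (t - 3/2 * pi - 2))"
      by (simp add: algebra_simps)
    then have exp_split: "exp (\<i> * of_real (- 0 + 3/2 * pi + (3/2 * pi + 2) - t))
        = exp (\<i> * of_real (3/2 * pi)) * exp (\<i> * of_real (- (t - 3/2 * pi - 2)))"
      by (simp only: exp_add)
    show ?thesis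
      using heading_path_rslsr_R2[OF order, of t] 3 assms unfolding heading exp_split
      by (simp add: lsr_path_def Let_def arcL_def arcR_def algebra_simps)
  qed
qed

definition rsl_lsr_angle :: "real \<Rightarrow> real" where
  "rsl_lsr_angle p = 3/2 * pi * (1 - p)"

lemma rsl_lsr_angle_range:
  assumes "p \<in> {0..1}"
  shows "0 \<le> rsl_lsr_angle p" "rsl_lsr_angle p \<le> 3/2 * pi"
  using assms pi_gt_zero by (auto simp: rsl_lsr_angle_def mult_left_le)

lemma rsl_lsr_angle_diff_le: "\<bar>rsl_lsr_angle p - rsl_lsr_angle q\<bar> \<le> 6 * \<bar>p - q\<bar>"
proof -
  have "rsl_lsr_angle p - rsl_lsr_angle q = 3/2 * pi * (q - p)"
    by (simp add: rsl_lsr_angle_def right_diff_distrib)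
  then have "\<bar>rsl_lsr_angle p - rsl_lsr_angle q\<bar> = 3/2 * pi * \<bar>p - q\<bar>"
    using pi_ge_zero by (simp only: abs_mult abs_minus_commute[of q p])
  moreover have "pi * \<bar>p - q\<bar> \<le> 4 * \<bar>p - q\<bar>"
    using pi_less_4 by (simp add: mult_right_mono)
  ultimately show ?thesis by linarith
qed

lemma c1_close_rsl_lsr_paths:
  assumes "p \<in> {0..1}" "0 < e"
  shows "\<exists>d>0. \<forall>q\<in>{0..1}. \<bar>q - p\<bar> < d \<longrightarrow>
    c1_close e (rsl_lsr_length (rsl_lsr_angle q), heading_path (rsl_lsr_heading (rsl_lsr_angle q)))
      (rsl_lsr_length (rsl_lsr_angle p), heading_path (rsl_lsr_heading (rsl_lsr_angle p)))"
proof (rule c1_close_heading_paths[where M = 60])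
  show "1-lipschitz_on UNIV (rsl_lsr_heading (rsl_lsr_angle q))" if "q \<in> {0..1}" for q
    unfolding rsl_lsr_heading_def
    by (rule rslsr_heading_lipschitz[OF rsl_lsr_order[OF rsl_lsr_angle_range[OF that]]])
  show "\<bar>rsl_lsr_heading (rsl_lsr_angle q) s - rsl_lsr_heading (rsl_lsr_angle q') s\<bar> \<le> 60 * \<bar>q - q'\<bar>"
    for q q' s
  proof -
    have "\<bar>rsl_lsr_heading (rsl_lsr_angle q) s - rsl_lsr_heading (rsl_lsr_angle q') s\<bar>
        \<le> 10 * \<bar>rsl_lsr_angle q - rsl_lsr_angle q'\<bar>"
      by (rule rsl_lsr_heading_param_diff_le)
    also have "\<dots> \<le> 10 * (6 * \<bar>q - q'\<bar>)"
      using rsl_lsr_angle_diff_le[of q q'] by simp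
    finally show ?thesis by simp
  qed
  show "\<bar>rsl_lsr_length (rsl_lsr_angle q) - rsl_lsr_length (rsl_lsr_angle q')\<bar> \<le> 60 * \<bar>q - q'\<bar>"
    for q q'
  proof -
    have "\<bar>rsl_lsr_length (rsl_lsr_angle q) - rsl_lsr_length (rsl_lsr_angle q')\<bar>
        \<le> 4 * \<bar>rsl_lsr_angle q - rsl_lsr_angle q'\<bar>"
      by (rule rsl_lsr_length_diff_le)
    also have "\<dots> \<le> 4 * (6 * \<bar>q - q'\<bar>)"
      using rsl_lsr_angle_diff_le[of q q'] by simp
    also have "\<dots> \<le> 60 * \<bar>q - q'\<bar>"
      by simp
    finally show ?thesis .
  qed
  show "0 < rsl_lsr_length (rsl_lsr_angle q) \<and> rsl_lsr_length (rsl_lsr_angle q) \<le> 60" for q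
    using rsl_lsr_length_bounds[of "rsl_lsr_angle q"] pi_less_4 by linarith
qed (use assms in auto)

text \<open>The heading paths agree with the Dubins paths only on [0, 3\<pi> + 2], so the end
  points of the homotopy are replaced by the Dubins paths themselves.\<close>
definition rsl_lsr_homotopy :: "real \<Rightarrow> real \<times> (real \<Rightarrow> complex)" where
  "rsl_lsr_homotopy p =
    (if p = 0 then (3/2 * pi + 2 + 3/2 * pi, rsl_path 0 1 (3/2 * pi) 2 (3/2 * pi))
     else if p = 1 then (3/2 * pi + 2 + 3/2 * pi, lsr_path 0 1 (3/2 * pi) 2 (3/2 * pi))
     else (rsl_lsr_length (rsl_lsr_angle p), heading_path (rsl_lsr_heading (rsl_lsr_angle p))))"

lemma rsl_lsr_homotopy_eq_heading_path:
  assumes "p \<in> {0..1}"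
  shows "fst (rsl_lsr_homotopy p) = rsl_lsr_length (rsl_lsr_angle p)"
    "\<forall>t\<in>{0..fst (rsl_lsr_homotopy p)}.
       heading_path (rsl_lsr_heading (rsl_lsr_angle p)) t = snd (rsl_lsr_homotopy p) t"
  using heading_path_rsl_lsr_RSL heading_path_rsl_lsr_LSR cos_3over2_pi sin_3over2_pi
  by (auto simp: rsl_lsr_homotopy_def rsl_lsr_angle_def rsl_lsr_length_def)

lemma bcp_rsl_lsr_homotopy:
  assumes "p \<in> {0..1}"
  shows "bcp 0 1 (-2) 1 (fst (rsl_lsr_homotopy p)) (snd (rsl_lsr_homotopy p))"
  using bcp_rsl_lsr[OF rsl_lsr_angle_range[OF assms]] rsl_lsr_homotopy_eq_heading_path[OF assms]
  by (metis bcp_cong)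

lemma rsl_lsr_homotopy_continuous:
  assumes "p \<in> {0..1}" "0 < e"
  shows "\<exists>d>0. \<forall>q\<in>{0..1}. \<bar>q - p\<bar> < d \<longrightarrow> c1_close e (rsl_lsr_homotopy q) (rsl_lsr_homotopy p)"
proof -
  obtain d where "d > 0" and close: "\<And>q. q \<in> {0..1} \<Longrightarrow> \<bar>q - p\<bar> < d \<Longrightarrow>
      c1_close e (rsl_lsr_length (rsl_lsr_angle q), heading_path (rsl_lsr_heading (rsl_lsr_angle q)))
        (rsl_lsr_length (rsl_lsr_angle p), heading_path (rsl_lsr_heading (rsl_lsr_angle p)))"
    using c1_close_rsl_lsr_paths[OF assms] by blast
  show ?thesis
  proof (intro exI conjI ballI impI)
    fix q assume q: "q \<in> {0..1}" "\<bar>q - p\<bar> < d"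
    note H_q = rsl_lsr_homotopy_eq_heading_path[OF q(1)]
    note H_p = rsl_lsr_homotopy_eq_heading_path[OF assms(1)]
    have "c1_close e (rsl_lsr_length (rsl_lsr_angle q), heading_path (rsl_lsr_heading (rsl_lsr_angle q)))
        (rsl_lsr_length (rsl_lsr_angle p), heading_path (rsl_lsr_heading (rsl_lsr_angle p)))"
      by (rule close[OF q])
    also have "?this \<longleftrightarrow> c1_close e (rsl_lsr_length (rsl_lsr_angle q), snd (rsl_lsr_homotopy q))
        (rsl_lsr_length (rsl_lsr_angle p), heading_path (rsl_lsr_heading (rsl_lsr_angle p)))"
      using H_q by (intro c1_close_cong(1)) (simp_all add: less_imp_le rsl_lsr_length_bounds)
    also have "c1_close e (rsl_lsr_length (rsl_lsr_angle q), snd (rsl_lsr_homotopy q))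
        (rsl_lsr_length (rsl_lsr_angle p), heading_path (rsl_lsr_heading (rsl_lsr_angle p)))
      \<longleftrightarrow> c1_close e (rsl_lsr_length (rsl_lsr_angle q), snd (rsl_lsr_homotopy q))
        (rsl_lsr_length (rsl_lsr_angle p), snd (rsl_lsr_homotopy p))"
      using H_p by (intro c1_close_cong(2)) (simp_all add: less_imp_le rsl_lsr_length_bounds)
    finally have "c1_close e (fst (rsl_lsr_homotopy q), snd (rsl_lsr_homotopy q))
        (fst (rsl_lsr_homotopy p), snd (rsl_lsr_homotopy p))"
      unfolding H_q(1) H_p(1) .
    then show "c1_close e (rsl_lsr_homotopy q) (rsl_lsr_homotopy p)" by simp
  qed fact
qed

lemma bounded_homotopic_rsl_lsr:
  "bounded_homotopic 0 1 (-2) 1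
    (3/2 * pi + 2 + 3/2 * pi, rsl_path 0 1 (3/2 * pi) 2 (3/2 * pi))
    (3/2 * pi + 2 + 3/2 * pi, lsr_path 0 1 (3/2 * pi) 2 (3/2 * pi))"
  unfolding bounded_homotopic_def
proof (intro exI[of _ rsl_lsr_homotopy] conjI ballI allI impI)
  show "rsl_lsr_homotopy 0 = (3/2 * pi + 2 + 3/2 * pi, rsl_path 0 1 (3/2 * pi) 2 (3/2 * pi))"
    "rsl_lsr_homotopy 1 = (3/2 * pi + 2 + 3/2 * pi, lsr_path 0 1 (3/2 * pi) 2 (3/2 * pi))"
    by (simp_all add: rsl_lsr_homotopy_def)
qed (simp_all add: bcp_rsl_lsr_homotopy rsl_lsr_homotopy_continuous)

theorem mainTheorem3:
  shows "\<exists>x X y Y a b c a' b' c'.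
    norm X = 1 \<and> norm Y = 1 \<and>
    0 < a \<and> a < 2 * pi \<and> 0 < b \<and> 0 < c \<and> c < 2 * pi \<and>
    0 < a' \<and> a' < 2 * pi \<and> 0 < b' \<and> 0 < c' \<and> c' < 2 * pi \<and>
    bcp x X y Y (a + b + c) (rsl_path x X a b c) \<and>
    bcp x X y Y (a' + b' + c') (lsr_path x X a' b' c') \<and>
    bounded_homotopic x X y Y (a + b + c, rsl_path x X a b c) (a' + b' + c', lsr_path x X a' b' c')"
proof -
  have "bcp 0 1 (-2) 1 (3/2 * pi + 2 + 3/2 * pi) (rsl_path 0 1 (3/2 * pi) 2 (3/2 * pi))"
    using bcp_rsl_lsr_homotopy[of 0] by (simp add: rsl_lsr_homotopy_def)
  moreover have "bcp 0 1 (-2) 1 (3/2 * pi + 2 + 3/2 * pi) (lsr_path 0 1 (3/2 * pi) 2 (3/2 * pi))"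
    using bcp_rsl_lsr_homotopy[of 1] by (simp add: rsl_lsr_homotopy_def)
  moreover have "0 < 3/2 * pi" "3/2 * pi < 2 * pi"
    using pi_gt_zero by simp_all
  moreover have "norm (1 :: complex) = 1" "0 < (2 :: real)"
    by simp_all
  ultimately show ?thesis
    using bounded_homotopic_rsl_lsr by blast
qed

end
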